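(* Let $n\ge 3$ be an integer and $m=n-2$. Under uniform transmission over the binary $2$-deletion channel with input length $n$, among all ${\boldsymbol y}\in\{0,1\}^m$ the input entropy $\mathsf{H}^{\mathsf{In}}_{2\text{-}\mathsf{Del}}({\boldsymbol y})$ is minimized only by ${\boldsymbol y}=0^m$ and ${\boldsymbol y}=1^m$, and $$\min_{{\boldsymbol y}\in\{0,1\}^m}\mathsf{H}^{\mathsf{In}}_{2\text{-}\mathsf{Del}}({\boldsymbol y}) = 2+\frac34\log_2\binom{m+2}{2}-\frac12\log_2(m+1).$$
   Context: For binary sequences ${\boldsymbol x}$ of length $N$ and ${\boldsymbol y}$ of length $\ell\le N$, the embedding number $\omega_{{\boldsymbol y}}({\boldsymbol x})$ is the number of index tuples $1\le i_1<\dots<i_\ell\le N$ with $x_{i_j}=y_j$ for all $j$. The $k$-deletion channel with input length $n$ maps ${\boldsymbol x}\in\{0,1\}^n$ to ${\boldsymbol y}\in\{0,1\}^{n-k}$ with probability $\Pr\{{\boldsymbol y}\mid{\boldsymbol x}\}=\omega_{{\boldsymbol y}}({\boldsymbol x})/\binom{n}{k}$. Under uniform transmission $X$ is uniform on $\{0,1\}^n$, and $\mathsf{H}^{\mathsf{In}}_{k\text{-}\mathsf{Del}}({\boldsymbol y})=H(X\mid Y={\boldsymbol y})=-\sum_{{\boldsymbol x}}P({\boldsymbol x}\mid{\boldsymbol y})\log_2 P({\boldsymbol x}\mid{\boldsymbol y})$ with $P({\boldsymbol x}\mid {\boldsymbol y})=\Pr\{{\boldsymbol y}\mid{\boldsymbol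 x}\}/\sum_{{\boldsymbol x}'}\Pr\{{\boldsymbol y}\mid{\boldsymbol x}'\}$. $0^m$, $1^m$ denote the constant sequences of length $m$. *)

theory Defs
  imports "HOL-Analysis.Analysis"
begin

text \<open>Binary sequences are boolean lists (False = 0, True = 1).
  Index tuples i_1 < ... < i_l are represented by their index sets I of size l;
  nths x I lists the entries of x at the indices in I in increasing order.\<close>

definition embedding_number :: "bool list \<Rightarrow> bool list \<Rightarrow> nat" where
  "embedding_number y x =
     card {I. I \<subseteq> {0..<length x} \<and> card I = length y \<and> nths x I = y}"

definition binseqs :: "nat \<Rightarrow> bool list set" where
  "binseqs n = {x. length x = n}"

definition del_channel :: "nat \<Rightarrow> nat \<Rightarrow> bool list \<Rightarrow> bool list \<Rightarrow> real" where
  "del_channel n k x y = real (embedding_number y x) / real (n choose k)"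

text \<open>Posterior P(x | y) under uniform input on {0,1}^n.\<close>
definition posterior :: "nat \<Rightarrow> nat \<Rightarrow> bool list \<Rightarrow> bool list \<Rightarrow> real" where
  "posterior n k x y = del_channel n k x y / (\<Sum>x'\<in>binseqs n. del_channel n k x' y)"

definition input_entropy :: "nat \<Rightarrow> nat \<Rightarrow> bool list \<Rightarrow> real" where
  "input_entropy n k y =
     - (\<Sum>x\<in>binseqs n. (if posterior n k x y = 0 then 0
                          else posterior n k x y * log 2 (posterior n k x y)))"

end

theory Submission
  imports Defs
begin

(*
  Let y have length m and n = m + 2.  Since the sum of emb y x over all x of length n is
  S = 4 * C(n, 2) for every y, the posterior of x is emb y x / S and
  H(X | Y = y) = log S - F(y) / (S ln 2), where F(y) is the sum of phi (emb y x) with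
  phi t = t ln t.  So the entropy is minimal exactly where F is maximal.
  All weights emb y x lie in 0..N with N = C(n, 2).  As phi is convex and vanishes at 0 and 1,
  on these integers it lies below the broken line through (1, 0), (m + 1, phi (m + 1)) and
  (N, phi N), whose slope increases strictly at m + 1.  Hence
  F(y) <= alpha * sum (t - 1)+ + beta * sum (t - (m + 1))+ with beta > 0.  The first sum does
  not depend on y, because neither does the number of supersequences of y of length n; the
  second is at most C(m + 1, 2), with equality only for constant y, by induction on y.
  For y = 0^m the weights are exactly 0, 1, m + 1 and N, so every bound is attained.
*)

section \<open>Embedding numbers\<close>

fun emb :: "'a list \<Rightarrow> 'a list \<Rightarrow> nat" where
  "emb [] x = 1"
| "emb (b # y) [] = 0"
| "emb (b # y) (a # x) = emb (b # y) x + (if a = b then emb y x else 0)"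

definition index_sets :: "'a list \<Rightarrow> 'a list \<Rightarrow> nat set set" where
  "index_sets y x = {I. I \<subseteq> {0..<length x} \<and> nths x I = y}"

lemma embedding_number_eq_card_index_sets: "embedding_number y x = card (index_sets y x)"
proof -
  have "card I = length (nths x I)" if "I \<subseteq> {0..<length x}" for I
    using that by (auto simp: length_nths intro!: arg_cong[where f = card])
  then show ?thesis
    unfolding embedding_number_def index_sets_def by (metis (lifting))
qed

lemma index_sets_Nil: "index_sets [] x = {{}}"
  by (auto simp: index_sets_def length_nths simp flip: length_0_conv)

lemma index_sets_Cons_Nil: "index_sets (b # y) [] = {}"
  by (auto simp: index_sets_def)

lemma index_sets_Cons_Cons:
  "index_sets (b # y) (a # x) =
     image Suc ` index_sets (b # y) x \<union>
     (if a = b then (\<lambda>I. insert 0 (Suc ` I)) ` index_sets y x else {})"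
proof (rule set_eqI)
  fix I :: "nat set"
  define J where "J = {j. Suc j \<in> I}"
  have I: "I = (if 0 \<in> I then insert 0 (Suc ` J) else Suc ` J)"
    by (auto simp: J_def image_iff) (metis not0_implies_Suc)+
  have "{j. Suc j \<in> Suc ` K} = K" "{j. Suc j \<in> insert 0 (Suc ` K)} = K" for K
    by auto
  then have shifted: "I \<in> image Suc ` S \<longleftrightarrow> 0 \<notin> I \<and> J \<in> S"
    and shifted0: "I \<in> (\<lambda>K. insert 0 (Suc ` K)) ` S \<longleftrightarrow> 0 \<in> I \<and> J \<in> S" for S
    using I by (auto simp: J_def)
  have "I \<subseteq> {0..<Suc (length x)} \<longleftrightarrow> J \<subseteq> {0..<length x}"
    by (subst I) (auto simp: J_def)
  moreover have "nths (a # x) I = (if 0 \<in> I then a # nths x J else nths x J)"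
    by (simp add: nths_Cons J_def)
  ultimately show "I \<in> index_sets (b # y) (a # x) \<longleftrightarrow> I \<in> image Suc ` index_sets (b # y) x \<union>
     (if a = b then (\<lambda>I. insert 0 (Suc ` I)) ` index_sets y x else {})"
    unfolding Un_iff shifted by (cases "a = b") (auto simp: shifted0 index_sets_def)
qed

lemma finite_index_sets: "finite (index_sets y x)"
  unfolding index_sets_def by (rule finite_subset[of _ "Pow {0..<length x}"]) auto

lemma embedding_number_eq_emb: "embedding_number y x = emb y x"
  unfolding embedding_number_eq_card_index_sets
proof (induction y x rule: emb.induct)
  case (3 b y a x)
  have "card (index_sets (b # y) (a # x)) = card (image Suc ` index_sets (b # y) x) + 
     card (if a = b then (\<lambda>I. insert 0 (Suc ` I)) ` index_sets y x else {})"
    unfolding index_sets_Cons_Cons by (rule card_Un_disjoint) (auto simp: finite_index_sets)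
  moreover have "inj_on (image Suc) A" "inj_on (\<lambda>I. insert 0 (Suc ` I)) A" for A :: "nat set set"
    by (auto intro!: inj_on_inverseI[where g = "\<lambda>I. {j. Suc j \<in> I}"])
  ultimately show ?case using 3 by (simp add: card_image)
qed (simp_all add: index_sets_Nil index_sets_Cons_Nil)

section \<open>Sums over all binary sequences of a given length\<close>

lemma finite_binseqs [simp]: "finite (binseqs n)"
  unfolding binseqs_def using finite_lists_length_eq[of "UNIV :: bool set" n] by simp

lemma card_binseqs: "card (binseqs n) = 2 ^ n"
  unfolding binseqs_def using card_lists_length_eq[of "UNIV :: bool set" n] by simp

lemma binseqs_0: "binseqs 0 = {[]}"
  by (auto simp: binseqs_def)

lemma sum_binseqs_Suc:
  "(\<Sum>x\<in>binseqs (Suc n). f x) = (\<Sum>x\<in>binseqs n. f (b # x) + f ((\<not> b) # x))"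
proof -
  have "binseqs (Suc n) = Cons True ` binseqs n \<union> Cons False ` binseqs n"
    unfolding binseqs_def by (auto simp: image_iff length_Suc_conv)
  then have "(\<Sum>x\<in>binseqs (Suc n). f x) = sum f (Cons True ` binseqs n) + sum f (Cons False ` binseqs n)"
    by (simp only:) (rule sum.union_disjoint, auto)
  then show ?thesis
    by (cases b) (simp_all add: sum.distrib sum.reindex add.commute)
qed

lemma card_binseqs_Suc:
  "card {x \<in> binseqs (Suc n). P x} =
     card {x \<in> binseqs n. P (b # x)} + card {x \<in> binseqs n. P ((\<not> b) # x)}"
  using sum_binseqs_Suc[of "\<lambda>x. of_bool (P x) :: nat" n b]
  by (simp add: sum.distrib Int_def)

lemma sum_binseqs_count_list:
  fixes f :: "nat \<Rightarrow> 'a::comm_semiring_1"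
  shows "(\<Sum>x\<in>binseqs n. f (count_list x c)) = (\<Sum>k\<le>n. of_nat (n choose k) * f k)"
proof (induction n arbitrary: f)
  case 0
  then show ?case by (simp add: binseqs_0)
next
  case (Suc n)
  have "(\<Sum>x\<in>binseqs (Suc n). f (count_list x c)) =
        (\<Sum>k\<le>n. of_nat (n choose k) * f (Suc k)) + (\<Sum>k\<le>n. of_nat (n choose k) * f k)"
    by (simp add: sum_binseqs_Suc[where b = c] sum.distrib Suc.IH[of "\<lambda>k. f (Suc k)"] Suc.IH[of f])
  also have "(\<Sum>k\<le>n. of_nat (n choose k) * f k) = f 0 + (\<Sum>k\<le>n. of_nat (n choose Suc k) * f (Suc k))"
    using sum.atMost_Suc_shift[of "\<lambda>k. of_nat (n choose k) * f k" n] by (simp add: binomial_eq_0)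
  also have "(\<Sum>k\<le>n. of_nat (n choose k) * f (Suc k)) + \<dots> = (\<Sum>k\<le>Suc n. of_nat (Suc n choose k) * f k)"
    unfolding sum.atMost_Suc_shift[of "\<lambda>k. of_nat (Suc n choose k) * f k" n]
    by (simp add: sum.distrib algebra_simps)
  finally show ?case .
qed

lemma emb_eq_0_if_shorter: "length x < length y \<Longrightarrow> emb y x = 0"
  by (induction y x rule: emb.induct) auto

lemma emb_le_binomial: "emb y x \<le> length x choose length y"
  by (induction y x rule: emb.induct) (auto intro: add_le_mono)

lemma emb_replicate: "emb (replicate k c) x = count_list x c choose k"
proof (induction x arbitrary: k)
  case Nil
  then show ?case by (cases k) simp_all
next
  case (Cons a x)
  show ?case
  proof (cases k)
    case (Suc j)
    then show ?thesis using Cons.IH[of j] Cons.IH[of k] by simp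
  qed simp
qed

lemma emb_Cons_not_member: "b \<notin> set x \<Longrightarrow> emb (b # y) x = 0"
  by (induction x) auto

lemma emb_pos_Cons: "0 < emb y x \<Longrightarrow> 0 < emb y (a # x)"
  by (cases y) auto

lemma emb_pos_if_emb_Cons_pos: "0 < emb (b # y) x \<Longrightarrow> 0 < emb y x"
  by (induction x) (auto simp: emb_pos_Cons split: if_splits)

lemma emb_Cons_Cons_pos_iff: "0 < emb (b # y) (b # x) \<longleftrightarrow> 0 < emb y x"
  using emb_pos_if_emb_Cons_pos by auto

lemma sum_emb:
  "(\<Sum>x\<in>binseqs n. emb y x) = 2 ^ (n - length y) * (n choose length y)"
proof (induction n arbitrary: y)
  case 0
  then show ?case by (cases y) (simp_all add: binseqs_0)
next
  case (Suc n)
  show ?case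
  proof (cases y)
    case Nil
    then show ?thesis by (simp add: card_binseqs)
  next
    case (Cons b z)
    have "(\<Sum>x\<in>binseqs (Suc n). emb y x) = 2 * (\<Sum>x\<in>binseqs n. emb y x) + (\<Sum>x\<in>binseqs n. emb z x)"
      by (simp add: sum_binseqs_Suc[where b = b] Cons sum.distrib)
    also have "\<dots> = 2 ^ (n - length z) * ((n choose length z) + (n choose Suc (length z)))"
    proof (cases "length z < n")
      case True
      then have "2 ^ (n - length z) = 2 * (2::nat) ^ (n - Suc (length z))"
        by (simp flip: power_Suc add: Suc_diff_Suc)
      then show ?thesis using Suc.IH by (simp add: Cons algebra_simps)
    qed (simp add: Suc.IH Cons binomial_eq_0)
    finally show ?thesis by (simp add: Cons)
  qed
qed

lemma sum_choose_Suc: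
  "(\<Sum>i\<le>Suc j. Suc n choose i) = (\<Sum>i\<le>Suc j. n choose i) + (\<Sum>i\<le>j. n choose i)"
  unfolding sum.atMost_Suc_shift[of "\<lambda>i. Suc n choose i"] sum.atMost_Suc_shift[of "\<lambda>i. n choose i" j]
  by (simp add: sum.distrib)

lemma card_emb_pos:
  "length y \<le> n \<Longrightarrow> card {x \<in> binseqs n. 0 < emb y x} = (\<Sum>i\<le>n - length y. n choose i)"
proof (induction n arbitrary: y)
  case 0
  then show ?case by (simp add: binseqs_0)
next
  case (Suc n)
  show ?case
  proof (cases y)
    case Nil
    then show ?thesis using choose_row_sum[of "Suc n"] by (simp add: card_binseqs)
  next
    case (Cons b z)
    have split: "card {x \<in> binseqs (Suc n). 0 < emb y x} =
          card {x \<in> binseqs n. 0 < emb z x} + card {x \<in> binseqs n. 0 < emb y x}"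
      by (simp only: card_binseqs_Suc[where b = b] Cons emb_Cons_Cons_pos_iff) simp
    show ?thesis
    proof (cases "length y = Suc n")
      case True
      then have "{x \<in> binseqs n. 0 < emb y x} = {}"
        by (auto simp: emb_eq_0_if_shorter binseqs_def)
      then show ?thesis using split Suc.IH[of z] True by (simp add: Cons)
    next
      case False
      define j where "j = n - length y"
      have j: "n - length z = Suc j" "Suc n - length y = Suc j"
        using False Suc.prems by (auto simp: j_def Cons Suc_diff_Suc)
      have "card {x \<in> binseqs (Suc n). 0 < emb y x} = (\<Sum>i\<le>Suc j. n choose i) + (\<Sum>i\<le>j. n choose i)"
        using split Suc.IH[of z] Suc.IH[of y] Suc.prems False j by (simp add: Cons j_def)
      also have "\<dots> = (\<Sum>i\<le>Suc n - length y. Suc n choose i)"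
        unfolding j by (rule sum_choose_Suc[symmetric])
      finally show ?thesis .
    qed
  qed
qed

section \<open>Embedding numbers above a threshold\<close>

lemma sum_minus_1_add_card_pos:
  fixes f :: "'a \<Rightarrow> nat"
  assumes "finite A"
  shows "(\<Sum>x\<in>A. f x - 1) + card {x \<in> A. 0 < f x} = sum f A"
proof -
  have "card {x \<in> A. 0 < f x} = (\<Sum>x\<in>A. of_bool (0 < f x))"
    using assms by (simp add: Int_def)
  then show ?thesis
    by (simp add: sum.distrib[symmetric] of_bool_def) (rule sum.cong, auto)
qed

lemma sum_emb_minus_1:
  "length y \<le> n \<Longrightarrow>
   (\<Sum>x\<in>binseqs n. emb y x - 1) + (\<Sum>i\<le>n - length y. n choose i) =
     2 ^ (n - length y) * (n choose length y)"
  using sum_minus_1_add_card_pos[of "binseqs n" "emb y"] by (simp add: sum_emb card_emb_pos)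

lemma sum_emb_minus_1_Suc: "(\<Sum>x\<in>binseqs (Suc (length y)). emb y x - 1) = length y"
  using sum_emb_minus_1[of y "Suc (length y)"] by simp

lemma sum_emb_minus_1_Suc_Suc:
  "(\<Sum>x\<in>binseqs (length y + 2). emb y x - 1) + (length y + 3) = 3 * (length y + 2 choose 2)"
proof -
  have "{..2::nat} = {0, 1, 2}"
    by auto
  then have "(\<Sum>i\<le>2. length y + 2 choose i) = 1 + (length y + 2) + (length y + 2 choose 2)"
    by simp
  moreover have "length y + 2 choose length y = length y + 2 choose 2"
    using binomial_symmetric[of "length y" "length y + 2"] by simp
  ultimately show ?thesis
    using sum_emb_minus_1[of y "length y + 2"] by simp
qed

definition emb_excess :: "bool list \<Rightarrow> nat" where
  "emb_excess y = (\<Sum>x\<in>binseqs (length y + 2). emb y x - (length y + 1))"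

(* Each counted x makes the pointwise inequality behind this bound strict. *)
lemma emb_excess_Cons:
  "emb_excess (b # y) + card {x \<in> binseqs (length y + 2). emb (b # y) x = 0 \<and> length y + 2 \<le> emb y x}
     \<le> length y + 1 + emb_excess y"
proof -
  let ?X = "binseqs (length y + 2)"
  define P where "P x \<longleftrightarrow> emb (b # y) x = 0 \<and> length y + 2 \<le> emb y x" for x
  have "emb_excess (b # y) = (\<Sum>x\<in>binseqs (Suc (length y + 2)). emb (b # y) x - (length y + 2))"
    by (simp add: emb_excess_def)
  also have "\<dots> =
      (\<Sum>x\<in>?X. (emb (b # y) (b # x) - (length y + 2)) + (emb (b # y) ((\<not> b) # x) - (length y + 2)))"
    by (rule sum_binseqs_Suc)
  finally have lhs: "emb_excess (b # y) = \<dots>" .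
  have card: "card {x \<in> ?X. P x} = (\<Sum>x\<in>?X. of_bool (P x))"
    by (simp add: Int_def)
  have rhs: "length y + 1 + emb_excess y = (\<Sum>x\<in>?X. (emb (b # y) x - 1) + (emb y x - (length y + 1)))"
    using sum_emb_minus_1_Suc[of "b # y"] by (simp add: emb_excess_def sum.distrib)
  have pointwise:
    "(emb (b # y) (b # x) - (length y + 2)) + (emb (b # y) ((\<not> b) # x) - (length y + 2)) + of_bool (P x)
     \<le> (emb (b # y) x - 1) + (emb y x - (length y + 1))" if "x \<in> ?X" for x
  proof -
    have "emb (b # y) x \<le> length y + 2"
      using emb_le_binomial[of "b # y" x] that by (simp add: binseqs_def)
    then show ?thesis by (auto simp: P_def)
  qed
  have "emb_excess (b # y) + card {x \<in> ?X. P x} =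
      (\<Sum>x\<in>?X. (emb (b # y) (b # x) - (length y + 2)) + (emb (b # y) ((\<not> b) # x) - (length y + 2))
        + of_bool (P x))"
    unfolding lhs card by (simp only: sum.distrib)
  also have "\<dots> \<le> length y + 1 + emb_excess y"
    unfolding rhs by (intro sum_mono pointwise)
  finally show ?thesis unfolding P_def .
qed

lemma emb_excess_le: "emb_excess y \<le> length y + 1 choose 2"
proof (induction y)
  case Nil
  then show ?case by (simp add: emb_excess_def)
next
  case (Cons b y)
  then show ?case using emb_excess_Cons[of b y] by (simp add: numeral_2_eq_2)
qed

lemma add_2_le_choose_2: "1 \<le> k \<Longrightarrow> k + 2 \<le> k + 2 choose 2"
  using zero_less_binomial_iff[of "k + 1" 2] by (simp add: numeral_2_eq_2)

lemma emb_excess_less: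
  "True \<in> set y \<Longrightarrow> False \<in> set y \<Longrightarrow> emb_excess y < length y + 1 choose 2"
proof (induction y)
  case Nil
  then show ?case by simp
next
  case (Cons b y)
  show ?case
  proof (cases "True \<in> set y \<and> False \<in> set y")
    case True
    then show ?thesis using Cons.IH emb_excess_Cons[of b y] by (simp add: numeral_2_eq_2)
  next
    case False
    define k where "k = length y"
    have "b \<notin> set y" and "(\<not> b) \<in> set y"
      using False Cons.prems by (cases b; simp)+
    have "\<forall>z\<in>set y. z = (\<not> b)"
      using \<open>b \<notin> set y\<close> by (induction y) auto
    then have y: "y = replicate k (\<not> b)"
      unfolding k_def by (simp add: replicate_length_same)
    have k: "1 \<le> k"
      using \<open>(\<not> b) \<in> set y\<close> unfolding k_def by (cases y) auto
    let ?W = "{x \<in> binseqs (length y + 2). emb (b # y) x = 0 \<and> length y + 2 \<le> emb y x}"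
    have "count_list (replicate j (\<not> b)) (\<not> b) = j" for j
      by (induction j) auto
    moreover have "k + 2 choose k = k + 2 choose 2"
      using binomial_symmetric[of k "k + 2"] by simp
    ultimately have "replicate (k + 2) (\<not> b) \<in> ?W"
      using add_2_le_choose_2[OF k] by (simp add: y binseqs_def emb_Cons_not_member emb_replicate)
    then have "card ?W \<noteq> 0"
      by (subst card_0_eq) auto
    then have "emb_excess (b # y) < length y + 1 + emb_excess y"
      using emb_excess_Cons[of b y] by linarith
    then show ?thesis using emb_excess_le[of y] by (simp add: numeral_2_eq_2)
  qed
qed

section \<open>The function t ln t\<close>

definition xlnx :: "real \<Rightarrow> real" where
  "xlnx t = t * ln t"

lemma xlnx_0 [simp]: "xlnx 0 = 0" and xlnx_1 [simp]: "xlnx 1 = 0"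
  by (simp_all add: xlnx_def)

lemma convex_on_xlnx: "convex_on {0<..} xlnx"
proof (rule convex_on_realI[where f' = "\<lambda>t. ln t + 1"])
  show "(xlnx has_real_derivative ln t + 1) (at t)" if "t \<in> {0<..}" for t
    using that unfolding xlnx_def by (auto intro!: derivative_eq_intros)
qed auto

lemma xlnx_above_tangent:
  assumes "0 < t" "0 < s" "t \<noteq> s"
  shows "xlnx s + (ln s + 1) * (t - s) < xlnx t"
proof -
  have "ln (s / t) < s / t - 1"
    using assms ln_le_minus_one[of "s / t"] ln_eq_minus_one[of "s / t"] by fastforce
  then have "t * (ln s - ln t) < s - t"
    using assms by (simp add: ln_div field_simps)
  then show ?thesis
    by (simp add: xlnx_def algebra_simps)
qed

lemma xlnx_slopes_less:
  assumes "1 < l" "l < N"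
  shows "xlnx l / (l - 1) < (xlnx N - xlnx l) / (N - l)"
proof -
  have "xlnx l / (l - 1) < ln l + 1"
    using xlnx_above_tangent[of 1 l] assms by (simp add: field_simps)
  also have "\<dots> < (xlnx N - xlnx l) / (N - l)"
    using xlnx_above_tangent[of N l] assms by (simp add: field_simps)
  finally show ?thesis .
qed

lemma xlnx_le_broken_line:
  fixes k l N :: nat
  assumes "1 < l" "l < N" "k \<le> N"
  shows "xlnx k \<le> xlnx l / (real l - 1) * real (k - 1)
      + ((xlnx N - xlnx l) / (real N - real l) - xlnx l / (real l - 1)) * real (k - l)"
proof -
  have chord: "xlnx t \<le> (xlnx q - xlnx p) / (q - p) * (t - p) + xlnx p"
    if "0 < p" "p \<le> t" "t \<le> q" for p q t
  proof -
    have "{p..q} \<subseteq> {0<..}"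
      using that(1) by auto
    then show ?thesis
      using convex_onD_Icc'[OF convex_on_subset[OF convex_on_xlnx], of p q t] that by simp
  qed
  consider "k = 0" | "1 \<le> k" "k \<le> l" | "l < k"
    by linarith
  then show ?thesis
  proof cases
    case 2
    then show ?thesis using chord[of 1 k l] assms by simp
  next
    case 3
    define \<alpha> where "\<alpha> = xlnx l / (real l - 1)"
    define s where "s = (xlnx N - xlnx l) / (real N - real l)"
    have "xlnx k \<le> s * (real k - l) + xlnx l"
      using chord[of l k N] assms 3 by (simp add: s_def)
    also have "xlnx l = \<alpha> * (real l - 1)"
      using assms by (simp add: \<alpha>_def)
    also have "s * (real k - l) + \<alpha> * (real l - 1) = \<alpha> * (real k - 1) + (s - \<alpha>) * (real k - l)"
      by (simp add: algebra_simps)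
    finally show ?thesis
      using 3 by (simp add: \<alpha>_def s_def)
  qed simp
qed

lemma sum_xlnx_le_broken_line:
  fixes w :: "'a \<Rightarrow> nat"
  assumes "1 < l" "l < N" "\<And>x. x \<in> A \<Longrightarrow> w x \<le> N"
  shows "(\<Sum>x\<in>A. xlnx (w x)) \<le> xlnx l / (real l - 1) * (\<Sum>x\<in>A. w x - 1)
      + ((xlnx N - xlnx l) / (real N - real l) - xlnx l / (real l - 1)) * (\<Sum>x\<in>A. w x - l)"
proof -
  have "(\<Sum>x\<in>A. xlnx (w x)) \<le> (\<Sum>x\<in>A. xlnx l / (real l - 1) * real (w x - 1)
      + ((xlnx N - xlnx l) / (real N - real l) - xlnx l / (real l - 1)) * real (w x - l))"
    using assms by (intro sum_mono xlnx_le_broken_line) auto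
  then show ?thesis
    by (simp add: sum.distrib sum_distrib_left)
qed

section \<open>Input entropy of the deletion channel\<close>

definition emb_xlnx_sum :: "nat \<Rightarrow> bool list \<Rightarrow> real" where
  "emb_xlnx_sum n y = (\<Sum>x\<in>binseqs n. xlnx (emb y x))"

lemma xlnx_div_log:
  assumes "0 \<le> w" "0 < W"
  shows "(if w / W = 0 then 0 else w / W * log 2 (w / W)) = xlnx w / (ln 2 * W) - w / W * log 2 W"
proof (cases "w = 0")
  case False
  with assms have log_quotient: "log 2 (w / W) = (ln w - ln W) / ln 2"
    by (simp add: log_def ln_div)
  show ?thesis
    unfolding log_quotient using False assms by (simp add: xlnx_def log_def field_simps)
qed simp

lemma sum_emb_add: "(\<Sum>x\<in>binseqs (length y + k). emb y x) = 2 ^ k * (length y + k choose k)"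
  using sum_emb[where n = "length y + k" and y = y] binomial_symmetric[of "length y" "length y + k"] by simp

lemma posterior_eq:
  assumes "length y + k = n"
  shows "posterior n k x y = emb y x / (2 ^ k * (n choose k))"
proof -
  have "(\<Sum>x'\<in>binseqs n. real (emb y x')) = 2 ^ k * (n choose k)"
    using sum_emb_add[of y k] assms by (simp flip: of_nat_sum)
  then show ?thesis
    by (simp add: posterior_def del_channel_def embedding_number_eq_emb flip: sum_divide_distrib)
qed

lemma input_entropy_eq:
  assumes "length y + k = n"
  shows "input_entropy n k y =
    log 2 (2 ^ k * (n choose k)) - emb_xlnx_sum n y / (ln 2 * (2 ^ k * (n choose k)))"
proof -
  define W :: real where "W = 2 ^ k * (n choose k)"
  have W: "0 < W"
    using assms by (simp add: W_def)
  have sum_W: "(\<Sum>x\<in>binseqs n. real (emb y x)) = W"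
    using sum_emb_add[of y k] assms by (simp add: W_def flip: of_nat_sum)
  have "input_entropy n k y = - (\<Sum>x\<in>binseqs n. xlnx (emb y x) / (ln 2 * W) - emb y x / W * log 2 W)"
    unfolding input_entropy_def posterior_eq[OF assms] W_def[symmetric]
    by (intro arg_cong[where f = uminus] sum.cong refl xlnx_div_log) (use W in auto)
  also have "\<dots> = (\<Sum>x\<in>binseqs n. real (emb y x)) / W * log 2 W - emb_xlnx_sum n y / (ln 2 * W)"
    by (simp add: emb_xlnx_sum_def sum_subtractf flip: sum_divide_distrib sum_distrib_right)
  also have "\<dots> = log 2 W - emb_xlnx_sum n y / (ln 2 * W)"
    using sum_W W by simp
  finally show ?thesis
    unfolding W_def .
qed

lemma emb_xlnx_sum_replicate:
  "emb_xlnx_sum (m + 2) (replicate m c) = xlnx (m + 2 choose 2) + (real m + 2) * xlnx (real m + 1)"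
proof -
  have "emb_xlnx_sum (m + 2) (replicate m c) = (\<Sum>k\<le>m + 2. (m + 2 choose k) * xlnx (k choose m))"
    unfolding emb_xlnx_sum_def emb_replicate by (rule sum_binseqs_count_list)
  also have "\<dots> = (\<Sum>k<m. (m + 2 choose k) * xlnx (k choose m))
        + (m + 2 choose m) * xlnx (m choose m)
        + (m + 2 choose (m + 1)) * xlnx ((m + 1) choose m)
        + (m + 2 choose (m + 2)) * xlnx ((m + 2) choose m)"
    by (simp add: lessThan_Suc_atMost[symmetric])
  also have "(\<Sum>k<m. (m + 2 choose k) * xlnx (k choose m)) = 0"
    by (rule sum.neutral) (simp add: binomial_eq_0)
  finally show ?thesis
    using binomial_symmetric[of 1 "m + 2"] binomial_symmetric[of 1 "m + 1"] binomial_symmetric[of m "m + 2"]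
    by (simp add: add.commute)
qed

lemma broken_line_identity:
  fixes a b l N :: real
  assumes "1 < l" "2 * N = (l + 1) * l"
  shows "a / (l - 1) * (3 * N - l - 2) + ((b - a) / (N - l) - a / (l - 1)) * (N - l) = b + (l + 1) * a"
proof -
  define u where "u = a / (l - 1)"
  define v where "v = (b - a) / (N - l)"
  have Nl: "N - l = l * (l - 1) / 2"
    using assms(2) by (simp add: field_simps)
  have N2: "2 * N - 2 = (l + 2) * (l - 1)"
    using assms(2) by (simp add: algebra_simps)
  have "u * (3 * N - l - 2) + (v - u) * (N - l) = u * (2 * N - 2) + v * (N - l)"
    by (simp add: algebra_simps)
  also have "\<dots> = (l + 2) * a + (b - a)"
    unfolding N2 u_def v_def Nl using assms(1) by simp
  also have "\<dots> = b + (l + 1) * a"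
    by (simp add: algebra_simps)
  finally show ?thesis
    by (simp only: u_def v_def)
qed

lemma emb_xlnx_sum_less_replicate:
  assumes y: "length y = m" and m: "1 \<le> m" and "True \<in> set y" "False \<in> set y"
  shows "emb_xlnx_sum (m + 2) y < emb_xlnx_sum (m + 2) (replicate m c)"
proof -
  define l N where "l = m + 1" and "N = m + 2 choose 2"
  define \<alpha> where "\<alpha> = xlnx l / (real l - 1)"
  define \<beta> where "\<beta> = (xlnx N - xlnx l) / (real N - real l) - \<alpha>"
  define E where "E = (\<Sum>x\<in>binseqs (m + 2). emb y x - 1)"
  have N_l: "N = l + (m + 1 choose 2)"
    using binomial_Suc_Suc[of "m + 1" 1] by (simp add: l_def N_def numeral_2_eq_2)
  have "0 < m + 1 choose 2"
    using m by simp
  then have l: "1 < l" "l < N"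
    using m N_l by (simp_all add: l_def)
  have "2 * N = (l + 1) * l"
    using times_binomial_minus1_eq[of 2 "m + 2"] by (simp add: l_def N_def)
  then have "real (2 * N) = real ((l + 1) * l)"
    by (simp only:)
  then have two_N: "2 * real N = (real l + 1) * real l"
    by (simp add: algebra_simps)
  have \<beta>: "0 < \<beta>"
    using l xlnx_slopes_less[of l N] by (simp add: \<alpha>_def \<beta>_def)
  have "emb y x \<le> N" if "x \<in> binseqs (m + 2)" for x
    using emb_le_binomial[of y x] that y binomial_symmetric[of m "m + 2"] by (simp add: binseqs_def N_def)
  then have bound: "emb_xlnx_sum (m + 2) y \<le> \<alpha> * E + \<beta> * emb_excess y"
    using sum_xlnx_le_broken_line[OF l, of "binseqs (m + 2)" "emb y"]
    by (simp add: emb_xlnx_sum_def emb_excess_def \<alpha>_def \<beta>_def E_def y l_def)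
  have "E + (m + 3) = 3 * N"
    using sum_emb_minus_1_Suc_Suc[of y] by (simp add: E_def N_def y)
  then have "real (E + (m + 3)) = real (3 * N)"
    by (simp only:)
  then have "real E = 3 * real N - real l - 2"
    by (simp add: l_def)
  moreover have "real (m + 1 choose 2) = real N - real l"
    using N_l by simp
  ultimately have "\<alpha> * E + \<beta> * (m + 1 choose 2) = xlnx N + (real l + 1) * xlnx l"
    unfolding \<alpha>_def \<beta>_def using broken_line_identity[OF _ two_N, of "xlnx l" "xlnx N"] l by simp
  also have "\<dots> = xlnx (m + 2 choose 2) + (real m + 2) * xlnx (real m + 1)"
    by (simp add: N_def l_def add.commute)
  finally have attained: "\<alpha> * E + \<beta> * (m + 1 choose 2) = \<dots>" .
  have "\<beta> * emb_excess y < \<beta> * (m + 1 choose 2)"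
    using emb_excess_less[OF assms(3,4)] \<beta> y by simp
  then show ?thesis
    unfolding emb_xlnx_sum_replicate using bound attained by linarith
qed

lemma input_entropy_replicate:
  "input_entropy (m + 2) 2 (replicate m c) =
     2 + 3/4 * log 2 (real (m + 2 choose 2)) - 1/2 * log 2 (real (m + 1))"
proof -
  define N L where "N = real (m + 2 choose 2)" and "L = real (m + 1)"
  have "2 * (m + 2 choose 2) = (m + 2) * (m + 1)"
    using times_binomial_minus1_eq[of 2 "m + 2"] by simp
  then have "(real m + 2) * L = 2 * N"
    unfolding N_def L_def by (metis of_nat_add of_nat_mult of_nat_numeral mult.commute)
  have "emb_xlnx_sum (m + 2) (replicate m c) = N * ln N + ((real m + 2) * L) * ln L"
    unfolding emb_xlnx_sum_replicate N_def L_def by (simp add: xlnx_def add.commute)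
  also have "\<dots> = N * ln N + 2 * N * ln L"
    using \<open>(real m + 2) * L = 2 * N\<close> by simp
  finally have sum: "emb_xlnx_sum (m + 2) (replicate m c) = N * ln N + 2 * N * ln L" .
  have "0 < N" "0 < L"
    by (simp_all add: N_def L_def)
  have ln_4N: "ln (4 * N) = 2 * ln 2 + ln N"
    using \<open>0 < N\<close> ln_realpow[of 2 2] by (simp add: ln_mult)
  have "input_entropy (m + 2) 2 (replicate m c) = log 2 (4 * N) - (N * ln N + 2 * N * ln L) / (ln 2 * (4 * N))"
    using input_entropy_eq[of "replicate m c" 2 "m + 2"] unfolding sum by (simp add: N_def)
  also have "\<dots> = 2 + 3/4 * log 2 N - 1/2 * log 2 L"
    using \<open>0 < N\<close> ln_4N by (simp add: log_def field_simps)
  finally show ?thesis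
    by (simp add: N_def L_def)
qed

lemma input_entropy_replicate_less:
  assumes y: "length y = m" and m: "1 \<le> m" and "True \<in> set y" "False \<in> set y"
  shows "input_entropy (m + 2) 2 (replicate m c) < input_entropy (m + 2) 2 y"
proof -
  define W where "W = real (2 ^ 2 * (m + 2 choose 2))"
  have "input_entropy (m + 2) 2 z = log 2 W - emb_xlnx_sum (m + 2) z / (ln 2 * W)"
    if "length z = m" for z
    using input_entropy_eq[of z 2 "m + 2", folded W_def] that by simp
  moreover have "0 < ln 2 * W"
    by (simp add: W_def)
  ultimately show ?thesis
    using emb_xlnx_sum_less_replicate[OF assms, of c] y by (simp add: divide_strict_right_mono)
qed

lemma mem_set_if_not_replicate:
  assumes "y \<notin> {replicate (length y) False, replicate (length y) True}"
  shows "True \<in> set y" and "False \<in> set y"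
proof -
  have replicate: "y = replicate (length y) (\<not> c)" if "c \<notin> set y" for c
    using that by (induction y) auto
  show "True \<in> set y"
    using replicate[of True] assms by auto
  show "False \<in> set y"
    using replicate[of False] assms by auto
qed

lemma argmin_eq_if_strict_minimum:
  assumes "finite A" "B \<subseteq> A" "B \<noteq> {}"
    and on_B: "\<And>x. x \<in> B \<Longrightarrow> f x = v"
    and off_B: "\<And>x. x \<in> A \<Longrightarrow> x \<notin> B \<Longrightarrow> v < f x"
  shows "{x \<in> A. \<forall>z\<in>A. f x \<le> f z} = B" and "(MIN x\<in>A. f x) = v"
proof -
  have lower: "v \<le> f z" if "z \<in> A" for z
    using on_B off_B that by (cases "z \<in> B") (auto simp: less_imp_le)
  obtain b where b: "b \<in> B"
    using assms(3) by blast
  show "{x \<in> A. \<forall>z\<in>A. f x \<le> f z} = B"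
  proof (intro equalityI subsetI)
    fix x
    assume "x \<in> {x \<in> A. \<forall>z\<in>A. f x \<le> f z}"
    then have "x \<in> A" and "f x \<le> v"
      using b assms(2) on_B by auto
    then show "x \<in> B"
      using off_B by fastforce
  qed (use assms(2) on_B lower in auto)
  have "v \<in> f ` A"
    using b assms(2) on_B by force
  then show "(MIN x\<in>A. f x) = v"
    using assms(1) lower by (intro Min_eqI) auto
qed

theorem theorem9:
  fixes n m :: nat
  assumes "n \<ge> 3" and "m = n - 2"
  shows "{y \<in> binseqs m. \<forall>z\<in>binseqs m. input_entropy n 2 y \<le> input_entropy n 2 z}
            = {replicate m False, replicate m True} \<and>
         (MIN y\<in>binseqs m. input_entropy n 2 y)
            = 2 + 3/4 * log 2 (real ((m + 2) choose 2)) - 1/2 * log 2 (real (m + 1))"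
proof -
  define v where "v = 2 + 3/4 * log 2 (real ((m + 2) choose 2)) - 1/2 * log 2 (real (m + 1))"
  have n: "n = m + 2" and m: "1 \<le> m"
    using assms by auto
  have replicate: "input_entropy n 2 (replicate m c) = v" for c
    unfolding n v_def by (rule input_entropy_replicate)
  have B: "{replicate m False, replicate m True} \<subseteq> binseqs m"
    by (auto simp: binseqs_def)
  have off_B: "v < input_entropy n 2 y"
    if "y \<in> binseqs m" "y \<notin> {replicate m False, replicate m True}" for y
    using that input_entropy_replicate_less[OF _ m mem_set_if_not_replicate, of y False] replicate[of False]
    by (simp add: n binseqs_def)
  have on_B: "input_entropy n 2 y = v" if "y \<in> {replicate m False, replicate m True}" for y
    using that replicate by auto
  show ?thesis
    using argmin_eq_if_strict_minimum[OF finite_binseqs B _ on_B off_B] unfolding v_def by simp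
qed

end
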